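(* Let $g(\tau_L,\tau_R) = (\tau_R^2, \tau_L\tau_R)$, $\alpha_0(\tau_L,\tau_R) = \tau_L\tau_R + 1$, $\phi_0(\tau_L,\tau_R) = \tau_L\tau_R + \tau_L - \tau_R$, and for $n \ge 0$ let $$\mathcal{R}_n = \left\{ (\tau_L,\tau_R) \in \mathbb{R}^2 \,\middle|\, \tau_R < -1,\ \phi_0\big(g^n(\tau_L,\tau_R)\big) > 0,\ \phi_0\big(g^{n+1}(\tau_L,\tau_R)\big) \le 0,\ \alpha_0(\tau_L,\tau_R) < 0 \right\}.$$ If $(\tau_L,\tau_R) \in \mathcal{R}_n$ with $n \ge 1$, then $g(\tau_L,\tau_R) \in \mathcal{R}_{n-1}$.
   Context: These objects arise from the skew tent map family $x \mapsto \tau_L x + 1$ for $x \le 0$, $x \mapsto \tau_R x + 1$ for $x \ge 0$; $g$ is the renormalisation operator associated with the substitution $(L,R)\mapsto(RR,LR)$, and $g^n$ denotes the $n$-fold composition. *)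

theory Defs
  imports Complex_Main
begin

definition g :: "real \<times> real \<Rightarrow> real \<times> real" where
  "g p = ((snd p)^2, fst p * snd p)"

definition alpha0 :: "real \<times> real \<Rightarrow> real" where
  "alpha0 p = fst p * snd p + 1"

definition phi0 :: "real \<times> real \<Rightarrow> real" where
  "phi0 p = fst p * snd p + fst p - snd p"

definition R :: "nat \<Rightarrow> (real \<times> real) set" where
  "R n = {p. snd p < -1 \<and> phi0 ((g ^^ n) p) > 0 \<and> phi0 ((g ^^ (n+1)) p) \<le> 0 \<and> alpha0 p < 0}"

end

theory Submission
  imports Defs
begin

text \<open>The two conditions on the iterates of \<open>g\<close> that define \<open>R (Suc m)\<close> at \<open>p\<close> are
  literally those defining \<open>R m\<close> at \<open>g p\<close>. What remains is to see that \<open>g\<close> preserves the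
  two conditions on the point itself: the new \<open>\<tau>\<^sub>R\<close> is \<open>\<tau>\<^sub>L\<tau>\<^sub>R < -1\<close> because
  \<open>\<alpha>\<^sub>0 < 0\<close>, and \<open>\<alpha>\<^sub>0\<close> stays negative because \<open>\<tau>\<^sub>L\<tau>\<^sub>R\<close> gets multiplied by \<open>\<tau>\<^sub>R\<^sup>2 > 1\<close>.\<close>

lemma g_mem_R_iff:
  "g p \<in> R m \<longleftrightarrow>
     snd (g p) < -1 \<and> phi0 ((g ^^ Suc m) p) > 0 \<and> phi0 ((g ^^ Suc (Suc m)) p) \<le> 0
     \<and> alpha0 (g p) < 0"
  by (simp add: R_def funpow_Suc_right del: funpow.simps)

lemma snd_g_less_minus_one:
  assumes "alpha0 p < 0"
  shows "snd (g p) < -1"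
  using assms by (simp add: g_def alpha0_def)

lemma alpha0_g_negative:
  assumes "1 < (snd p)\<^sup>2" and "alpha0 p < 0"
  shows "alpha0 (g p) < 0"
proof -
  have "fst p * snd p < -1"
    using assms(2) by (simp add: alpha0_def)
  then have "(snd p)\<^sup>2 * (fst p * snd p) < fst p * snd p"
    using assms(1) by (simp add: mult_less_cancel_right2)
  with \<open>fst p * snd p < -1\<close> show ?thesis
    by (simp add: g_def alpha0_def)
qed

theorem proposition2p2:
  fixes tL tR :: real and n :: nat
  assumes "n \<ge> 1" and "(tL, tR) \<in> R n"
  shows "g (tL, tR) \<in> R (n - 1)"
proof -
  obtain m where n: "n = Suc m"
    using assms(1) by (cases n) auto
  have tR: "tR < -1" and alpha0: "alpha0 (tL, tR) < 0"
    and phi0: "phi0 ((g ^^ Suc m) (tL, tR)) > 0" "phi0 ((g ^^ Suc (Suc m)) (tL, tR)) \<le> 0"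
    using assms(2) by (simp_all add: R_def n)
  have "1 < tR\<^sup>2"
    using tR one_less_power[of "-tR" 2] by simp
  then show ?thesis
    using alpha0 phi0 by (simp add: n g_mem_R_iff snd_g_less_minus_one alpha0_g_negative)
qed

end
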